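(* Let $\mathcal{S}:\mathbb{Z}\to\{L,R\}$ be a periodic symbol sequence of period $n$ with $\mathcal{S}_0=L$, and suppose $\mathcal{S}^{\overline0\,\overline\alpha\,(d)}=\mathcal{S}$ for some $1\le\alpha\le n-1$ and $1\le d\le n-1$ with $\gcd(d,n)=1$. Let $m$ denote the multiplicative inverse of $d$ modulo $n$, and $\ell=m\alpha\bmod n$. Then $\mathcal{S}=\mathcal{F}[\ell,m,n]$ and $\alpha=\ell d\bmod n$.
   Context: For a sequence $\mathcal{S}$ of period $n$: $\mathcal{S}^{\overline j}$ is the sequence differing from $\mathcal{S}$ exactly at indices $\equiv j\pmod n$, and $\mathcal{S}^{(j)}$ is the $j$-th left shift, $\mathcal{S}^{(j)}_i=\mathcal{S}_{i+j}$; superscript operations are applied left to right (so $\mathcal{S}^{\overline0\,\overline\alpha\,(d)}$ is the $d$-th left shift of the sequence obtained from $\mathcal{S}$ by changing the symbols at indices $\equiv0$ and $\equiv\alpha$). For positive integers $\ell<n$, $m<n$, $\gcd(m,n)=1$, $\mathcal{F}[\ell,m,n]_i=L$ if $im\bmod n<\ell$ and $R$ otherwise. *)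

theory Defs
  imports "HOL-Number_Theory.Number_Theory"
begin

datatype sym = L | R

fun other :: "sym \<Rightarrow> sym" where
  "other L = R" | "other R = L"

type_synonym symseq = "int \<Rightarrow> sym"

definition periodic_seq :: "nat \<Rightarrow> symseq \<Rightarrow> bool" where
  "periodic_seq n S \<longleftrightarrow> (\<forall>i. S (i + int n) = S i)"

text \<open>S^{overline j}: change the symbol at exactly the indices congruent to j mod n.\<close>
definition flip_at :: "nat \<Rightarrow> int \<Rightarrow> symseq \<Rightarrow> symseq" where
  "flip_at n j S = (\<lambda>i. if i mod int n = j mod int n then other (S i) else S i)"

text \<open>S^{(j)}: the j-th left shift.\<close>
definition lshift :: "int \<Rightarrow> symseq \<Rightarrow> symseq" where
  "lshift j S = (\<lambda>i. S (i + j))"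

definition F_seq :: "nat \<Rightarrow> nat \<Rightarrow> nat \<Rightarrow> symseq" where
  "F_seq l m n = (\<lambda>i. if (i * int m) mod int n < int l then L else R)"

end

theory Submission
  imports Defs
begin

text \<open>
  Read the fixed-point equation as a rule for the step from i to i + d: the symbol is kept,
  except that it switches when i + d lands in the residue class of 0 or of \<alpha>. Along the orbit
  k d, which meets every residue because d is invertible mod n, the index k d lies in the class of 0
  exactly when k \<equiv> 0 and in the class of \<alpha> exactly when k \<equiv> \<ell> = m \<alpha> (mod n). So, starting from
  S 0 = L, the symbol at k d is L precisely when k mod n < \<ell>, and taking k = i m mod n
  recovers S i.
\<close>

lemma other_other [simp]: "other (other x) = x"
  by (cases x) auto

lemma other_eq_L_iff [simp]: "other x = L \<longleftrightarrow> x = R"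
  by (cases x) auto

lemma other_eq_R_iff [simp]: "other x = R \<longleftrightarrow> x = L"
  by (cases x) auto

lemma periodic_seq_add_mult:
  assumes "periodic_seq n S"
  shows "S (i + c * int n) = S i"
proof (induction c rule: int_induct[where k = 0])
  case (step1 c)
  then show ?case
    using assms unfolding periodic_seq_def by (metis add.assoc distrib_right mult_1)
next
  case (step2 c)
  have "S (i + (c - 1) * int n) = S (i + (c - 1) * int n + int n)"
    using assms unfolding periodic_seq_def by simp
  also have "i + (c - 1) * int n + int n = i + c * int n"
    by (simp add: algebra_simps)
  finally show ?case
    using step2 by simp
qed simp

lemma periodic_seq_mod:
  assumes "periodic_seq n S"
  shows "S i = S (i mod int n)"
  using periodic_seq_add_mult[OF assms, of "i mod int n" "i div int n"] by simp

lemma lshift_flip_fixed_step: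
  assumes "lshift D (flip_at n a (flip_at n 0 S)) = S" and "a mod int n \<noteq> 0"
  shows "S (i + D) = (if (i + D) mod int n \<in> {0, a mod int n} then other (S i) else S i)"
proof -
  have "S i = lshift D (flip_at n a (flip_at n 0 S)) i"
    using assms(1) by simp
  then show ?thesis
    using assms(2) unfolding lshift_def flip_at_def by auto
qed

lemma switching_seq_eq:
  fixes g :: "nat \<Rightarrow> sym"
  assumes "0 < l" "l < n" "g 0 = L"
    and switch: "\<And>k. g (Suc k) = (if Suc k mod n \<in> {0, l} then other (g k) else g k)"
  shows "g k = (if k mod n < l then L else R)"
proof (induction k)
  case 0
  then show ?case
    using assms(1,3) by simp
next
  case (Suc k)
  have "k mod n < n"
    using assms(2) by simp
  then show ?case
    using Suc.IH switch[of k] assms(1,2) by (auto simp: mod_Suc)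
qed

lemma cong_mult_inverse_iff:
  fixes d m n k a :: nat
  assumes "[d * m = 1] (mod n)"
  shows "[k * d = a] (mod n) \<longleftrightarrow> [k = m * a] (mod n)"
proof
  have "[k * (d * m) = k * 1] (mod n)"
    using assms by (rule cong_scalar_left)
  moreover assume "[k * d = a] (mod n)"
  then have "[k * d * m = a * m] (mod n)"
    by (rule cong_scalar_right)
  ultimately show "[k = m * a] (mod n)"
    by (metis cong_sym cong_trans mult.assoc mult.commute mult_1_right)
next
  have "[a * (d * m) = a * 1] (mod n)"
    using assms by (rule cong_scalar_left)
  moreover assume "[k = m * a] (mod n)"
  then have "[k * d = m * a * d] (mod n)"
    by (rule cong_scalar_right)
  ultimately show "[k * d = a] (mod n)"
    by (metis cong_trans mult.assoc mult.commute mult_1_right)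
qed

lemma periodic_seq_mult_inverse:
  assumes "periodic_seq n S" and "[d * m = 1] (mod n)"
  shows "S i = S ((i * int m) mod int n * int d)"
proof -
  have "[int d * int m = 1] (mod int n)"
    using assms(2) by (metis cong_int_iff of_nat_1 of_nat_mult)
  then have "[i * int m * int d = i] (mod int n)"
    using cong_scalar_left[of "int d * int m" 1 "int n" i] by (simp add: ac_simps)
  then have "((i * int m) mod int n * int d) mod int n = i mod int n"
    unfolding cong_def by (simp add: mod_mult_left_eq)
  then show ?thesis
    using periodic_seq_mod[OF assms(1)] by metis
qed

lemma lshift_flip_fixed_orbit_step:
  fixes n \<alpha> d m k :: nat
  assumes fix_eq: "lshift (int d) (flip_at n (int \<alpha>) (flip_at n 0 S)) = S"
    and "\<alpha> \<noteq> 0" "\<alpha> < n" and "[d * m = 1] (mod n)"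
  shows "S (int (Suc k * d)) =
    (if Suc k mod n \<in> {0, m * \<alpha> mod n} then other (S (int (k * d))) else S (int (k * d)))"
proof -
  have "int \<alpha> mod int n \<noteq> 0"
    using assms(2,3) by simp
  note step = lshift_flip_fixed_step[OF fix_eq this, of "int (k * d)"]
  have "int (Suc k * d) mod int n \<in> {0, int \<alpha> mod int n} \<longleftrightarrow> Suc k mod n \<in> {0, m * \<alpha> mod n}"
    using cong_mult_inverse_iff[OF assms(4), of "Suc k" 0] cong_mult_inverse_iff[OF assms(4), of "Suc k" \<alpha>]
      assms(3)
    unfolding cong_def of_nat_mod [symmetric] by auto
  moreover have "int (k * d) + int d = int (Suc k * d)"
    by simp
  ultimately show ?thesis
    using step by presburger
qed

theorem proposition5p1:
  fixes S :: symseq and n \<alpha> d m :: nat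
  assumes per: "periodic_seq n S"
    and S0: "S 0 = L"
    and alpha: "1 \<le> \<alpha>" "\<alpha> \<le> n - 1"
    and d: "1 \<le> d" "d \<le> n - 1" "gcd d n = 1"
    and fix_eq: "lshift (int d) (flip_at n (int \<alpha>) (flip_at n 0 S)) = S"
    and m_inv: "m < n" "[d * m = 1] (mod n)"
  shows "S = F_seq ((m * \<alpha>) mod n) m n \<and> \<alpha> = (((m * \<alpha>) mod n) * d) mod n"
proof -
  define l where "l = m * \<alpha> mod n"
  have hit: "k * d mod n = a mod n \<longleftrightarrow> k mod n = m * a mod n" for k a
    using cong_mult_inverse_iff[OF m_inv(2)] unfolding cong_def .
  have "\<alpha> < n" "\<alpha> \<noteq> 0"
    using alpha by auto
  then have l: "0 < l" "l < n"
    using hit[of 0 \<alpha>] unfolding l_def by auto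
  define g where "g k = S (int (k * d))" for k
  have g_step: "g (Suc k) = (if Suc k mod n \<in> {0, l} then other (g k) else g k)" for k
    using lshift_flip_fixed_orbit_step[OF fix_eq \<open>\<alpha> \<noteq> 0\<close> \<open>\<alpha> < n\<close> m_inv(2)]
    unfolding g_def l_def .
  have "g 0 = L"
    using S0 unfolding g_def by simp
  note g = switching_seq_eq[OF l this g_step]
  have "S i = F_seq l m n i" for i
  proof -
    define k where "k = nat (i * int m mod int n)"
    have k: "int k = i * int m mod int n" "k < n"
      using l(2) unfolding k_def by (simp_all add: nat_less_iff)
    have "S i = g k"
      using periodic_seq_mult_inverse[OF per m_inv(2), of i] unfolding g_def k(1) [symmetric] by simp
    then show ?thesis
      using g[of k] k unfolding F_seq_def by simp
  qed
  moreover have "l * d mod n = \<alpha>"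
    using hit[of l \<alpha>] \<open>\<alpha> < n\<close> l(2) unfolding l_def by simp
  ultimately show ?thesis
    unfolding l_def by auto
qed

end
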